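(* Let $L\subset\mathbb{Z}^m$ be a non-zero lattice with $L\cap\mathbb{N}^m=\{\mathbf 0\}$ and $\mathrm{Sat}(L)=\ker_{\mathbb{Z}}(\mathcal{A})$. If $E\in\mathcal{T}_{\min}$, then (1) there is no circuit $\mathbf x^{\mathbf u_+}-\mathbf x^{\mathbf u_-}\in I_{\mathcal{A}}$ with $\mathrm{supp}(\mathbf x^{\mathbf u_+})\subsetneq E$ or $\mathrm{supp}(\mathbf x^{\mathbf u_-})\subsetneq E$; and (2) there exists a circuit $\mathbf x^{\mathbf u_+}-\mathbf x^{\mathbf u_-}\in I_{\mathcal{A}}$ with $\mathrm{supp}(\mathbf x^{\mathbf u_+})=E$ or $\mathrm{supp}(\mathbf x^{\mathbf u_-})=E$.
   Context: $K$ is a field, $\mathbf x^{\mathbf u}=x_1^{u_1}\cdots x_m^{u_m}$, and $\mathbf u_\pm$ are the positive/negative parts of $\mathbf u\in\mathbb{Z}^m$. $I_L=(\mathbf x^{\mathbf u_+}-\mathbf x^{\mathbf u_-}:\mathbf u\in L)\subset K[x_1,\ldots,x_m]$; $\mathrm{Sat}(L)=\{\mathbf u: d\mathbf u\in L\text{ for some nonzero } d\in\mathbb{Z}\}$; $\mathcal{A}=\{\mathbf a_1,\ldots,\mathbf a_m\}\subset\mathbb{Z}^n$, $\ker_{\mathbb{Z}}(\mathcal{A})=\{\mathbf q\in\mathbb{Z}^m:\sum q_i\mathbf a_i=0\}$, and $I_{\mathcal{A}}=I_{\ker_{\mathbb{Z}}(\mathcal{A})}$. A circuit is a nonzero $\mathbf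 u\in\ker_{\mathbb{Z}}(\mathcal{A})$ whose support $\mathrm{supp}(\mathbf u)=\{i:u_i\ne0\}$ is inclusion-minimal among nonzero vectors of $\ker_{\mathbb{Z}}(\mathcal{A})$ and whose coordinates are relatively prime; the binomial $\mathbf x^{\mathbf u_+}-\mathbf x^{\mathbf u_-}$ is then also called a circuit. $\mathrm{supp}(\mathbf x^{\mathbf w})=\mathrm{supp}(\mathbf w)$. A monomial $M$ is indispensable of $I_L$ if every system of binomial generators of $I_L$ contains a binomial having $M$ as a monomial. $\mathcal{T}_{\min}$ is the set of inclusion-minimal elements of the set of supports of indispensable monomials of $I_L$. *)

theory Defs
  imports Main "HOL-Library.Poly_Mapping" "HOL-Library.Function_Algebras"
begin

text \<open>Variables x_i are indexed by a finite type 'v (so m = CARD('v)); integer vectors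
  in Z^m are functions 'v => int. Polynomials in K[x_1..x_m] are ('v =>0 nat) =>0 'k.\<close>

type_synonym ('v,'k) mpoly = "('v \<Rightarrow>\<^sub>0 nat) \<Rightarrow>\<^sub>0 'k"

definition pos_part :: "('v \<Rightarrow> int) \<Rightarrow> 'v \<Rightarrow> nat" where
  "pos_part u = (\<lambda>i. nat (u i))"

definition neg_part :: "('v \<Rightarrow> int) \<Rightarrow> 'v \<Rightarrow> nat" where
  "neg_part u = (\<lambda>i. nat (- u i))"

definition vsupp :: "('v \<Rightarrow> 'a::zero) \<Rightarrow> 'v set" where
  "vsupp u = {i. u i \<noteq> 0}"

definition monom_c :: "('v::finite \<Rightarrow> nat) \<Rightarrow> 'k::zero \<Rightarrow> ('v,'k) mpoly" where
  "monom_c w c = Poly_Mapping.single (Abs_poly_mapping w) c"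

definition binom :: "('v::finite \<Rightarrow> int) \<Rightarrow> ('v,'k::comm_ring_1) mpoly" where
  "binom u = monom_c (pos_part u) 1 - monom_c (neg_part u) 1"

definition gen_ideal :: "'a::comm_ring_1 set \<Rightarrow> 'a set" where
  "gen_ideal S = {p. \<exists>F c. finite F \<and> F \<subseteq> S \<and> p = (\<Sum>f\<in>F. c f * f)}"

definition is_lattice :: "('v \<Rightarrow> int) set \<Rightarrow> bool" where
  "is_lattice L \<longleftrightarrow> 0 \<in> L \<and> (\<forall>u\<in>L. \<forall>v\<in>L. u + v \<in> L) \<and> (\<forall>u\<in>L. - u \<in> L)"

definition lattice_ideal :: "'k itself \<Rightarrow> ('v::finite \<Rightarrow> int) set \<Rightarrow> ('v,'k::field) mpoly set" where
  "lattice_ideal _ L = gen_ideal {binom u | u. u \<in> L}"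

definition Sat :: "('v \<Rightarrow> int) set \<Rightarrow> ('v \<Rightarrow> int) set" where
  "Sat L = {u. \<exists>d::int. d \<noteq> 0 \<and> (\<lambda>i. d * u i) \<in> L}"

text \<open>A = {a_1,...,a_m} in Z^n, given as a : 'v => ('w => int) with 'w finite (n = CARD('w))\<close>
definition kerZ :: "('v::finite \<Rightarrow> 'w::finite \<Rightarrow> int) \<Rightarrow> ('v \<Rightarrow> int) set" where
  "kerZ a = {q. \<forall>j. (\<Sum>i\<in>UNIV. q i * a i j) = 0}"

definition is_circuit :: "('v::finite \<Rightarrow> 'w::finite \<Rightarrow> int) \<Rightarrow> ('v \<Rightarrow> int) \<Rightarrow> bool" where
  "is_circuit a u \<longleftrightarrow> u \<in> kerZ a \<and> u \<noteq> 0 \<and>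
     \<not> (\<exists>v\<in>kerZ a. v \<noteq> 0 \<and> vsupp v \<subset> vsupp u) \<and> Gcd (range u) = 1"

definition is_binomial :: "('v::finite,'k::field) mpoly \<Rightarrow> bool" where
  "is_binomial f \<longleftrightarrow> (\<exists>u v c d. f = monom_c u c + monom_c v d)"

definition indispensable_monomial :: "'k::field itself \<Rightarrow> ('v::finite \<Rightarrow> int) set \<Rightarrow> ('v \<Rightarrow> nat) \<Rightarrow> bool" where
  "indispensable_monomial K L w \<longleftrightarrow>
     (\<forall>B::('v,'k) mpoly set. (\<forall>b\<in>B. is_binomial b) \<and> gen_ideal B = lattice_ideal K L \<longrightarrow>
        (\<exists>b\<in>B. Poly_Mapping.lookup b (Abs_poly_mapping w) \<noteq> 0))"

definition T_min :: "'k::field itself \<Rightarrow> ('v::finite \<Rightarrow> int) set \<Rightarrow> 'v set set" where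
  "T_min K L = (let S = {vsupp w | w. indispensable_monomial K L w} in
      {E \<in> S. \<not> (\<exists>E'\<in>S. E' \<subset> E)})"

end

theory Submission
  imports Defs "HOL.Rat"
begin

text \<open>
  Call two monomials congruent when their exponent vectors differ by an element of L. The sum of
  the coefficients over a congruence class vanishes on every multiple of a binomial of L, hence on
  all of I_L. So a monomial x^a of an element of I_L is accompanied by a second, congruent
  monomial x^b, and the lattice vector a - b has positive part below a. Choosing z in L with
  componentwise minimal positive part, the monomial x^(z+) therefore occurs in every binomial
  generating set: this yields indispensable monomials below the positive part of every nonzero
  lattice vector, and every indispensable monomial arises as such a positive part.

  Now let E be the support of a minimal indispensable monomial. A kernel vector with
  supp(u+) strictly inside E has a multiple in L, and below its positive part sits an
  indispensable monomial with support strictly inside E, contradicting minimality; this is (1).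
  For (2) write E = supp(y+) with y in L, and take a circuit conformal to y: its positive support
  lies in E and by (1) fills it.
\<close>

lemma lattice_add: "is_lattice L \<Longrightarrow> u \<in> L \<Longrightarrow> v \<in> L \<Longrightarrow> u + v \<in> L"
  unfolding is_lattice_def by blast

lemma lattice_uminus: "is_lattice L \<Longrightarrow> u \<in> L \<Longrightarrow> - u \<in> L"
  unfolding is_lattice_def by blast

lemma lattice_diff: "is_lattice L \<Longrightarrow> u \<in> L \<Longrightarrow> v \<in> L \<Longrightarrow> u - v \<in> L"
  using lattice_add[of L u "- v"] lattice_uminus[of L v] by simp

lemma pos_part_uminus: "pos_part (- u) = neg_part u"
  unfolding pos_part_def neg_part_def by auto

lemma vsupp_pos_part: "vsupp (pos_part u) = {i. u i > 0}"
  unfolding vsupp_def pos_part_def by auto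

lemma pos_part_minus_neg_part: "int (pos_part u i) - int (neg_part u i) = u i"
  unfolding pos_part_def neg_part_def by simp

lemma pos_part_neq_neg_part: "u \<noteq> 0 \<Longrightarrow> pos_part u \<noteq> neg_part u"
  by (metis pos_part_minus_neg_part diff_self ext zero_fun_def)

lemma gen_ideal_generator: "f \<in> S \<Longrightarrow> f \<in> gen_ideal S"
  unfolding gen_ideal_def by (intro CollectI exI[of _ "{f}"] exI[of _ "\<lambda>_. 1"]) simp

lemma poly_mapping_sum_single_keys:
  "p = (\<Sum>t\<in>Poly_Mapping.keys p. Poly_Mapping.single t (Poly_Mapping.lookup p t))"
  by (rule poly_mapping_eqI) (simp add: lookup_sum lookup_single when_def in_keys_iff)

subsection \<open>Congruence classes of monomials modulo a lattice\<close>

definition int_exponents :: "('v \<Rightarrow>\<^sub>0 nat) \<Rightarrow> 'v \<Rightarrow> int" where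
  "int_exponents a = (\<lambda>i. int (Poly_Mapping.lookup a i))"

definition lattice_congruent :: "('v \<Rightarrow> int) set \<Rightarrow> ('v \<Rightarrow>\<^sub>0 nat) \<Rightarrow> ('v \<Rightarrow>\<^sub>0 nat) \<Rightarrow> bool" where
  "lattice_congruent L a b \<longleftrightarrow> int_exponents b - int_exponents a \<in> L"

definition fiber_sum ::
    "('v \<Rightarrow> int) set \<Rightarrow> ('v \<Rightarrow>\<^sub>0 nat) \<Rightarrow> (('v \<Rightarrow>\<^sub>0 nat) \<Rightarrow>\<^sub>0 'k::comm_ring_1) \<Rightarrow> 'k" where
  "fiber_sum L a p = (\<Sum>b\<in>{b \<in> Poly_Mapping.keys p. lattice_congruent L a b}. Poly_Mapping.lookup p b)"

lemma lattice_congruent_refl: "is_lattice L \<Longrightarrow> lattice_congruent L a a"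
  unfolding lattice_congruent_def is_lattice_def by simp

lemma lattice_congruent_cong:
  assumes L: "is_lattice L" and bc: "int_exponents b - int_exponents c \<in> L"
  shows "lattice_congruent L a b \<longleftrightarrow> lattice_congruent L a c"
proof -
  have "int_exponents b - int_exponents a = (int_exponents c - int_exponents a)
      + (int_exponents b - int_exponents c)"
    and "int_exponents c - int_exponents a = (int_exponents b - int_exponents a)
      - (int_exponents b - int_exponents c)" by simp_all
  then show ?thesis
    unfolding lattice_congruent_def using lattice_add[OF L _ bc] lattice_diff[OF L _ bc] by metis
qed

lemma fiber_sum_superset:
  assumes "finite S" "Poly_Mapping.keys p \<subseteq> S"
  shows "fiber_sum L a p = (\<Sum>b\<in>{b \<in> S. lattice_congruent L a b}. Poly_Mapping.lookup p b)"
  unfolding fiber_sum_def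
  by (rule sum.mono_neutral_left) (use assms in \<open>auto simp: in_keys_iff\<close>)

lemma fiber_sum_add: "fiber_sum L a (p + q) = fiber_sum L a p + fiber_sum L a q"
proof -
  let ?S = "Poly_Mapping.keys p \<union> Poly_Mapping.keys q"
  show ?thesis
    using fiber_sum_superset[of ?S "p + q"] fiber_sum_superset[of ?S p]
      fiber_sum_superset[of ?S q] keys_add[of p q]
    by (simp add: lookup_add sum.distrib)
qed

lemma fiber_sum_diff: "fiber_sum L a (p - q) = fiber_sum L a p - fiber_sum L a q"
  using fiber_sum_add[of L a p "- q"] unfolding fiber_sum_def by (simp add: sum_negf)

lemma fiber_sum_zero [simp]: "fiber_sum L a 0 = 0"
  unfolding fiber_sum_def by simp

lemma fiber_sum_sum: "fiber_sum L a (\<Sum>f\<in>F. g f) = (\<Sum>f\<in>F. fiber_sum L a (g f))"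
  by (induction F rule: infinite_finite_induct) (auto simp: fiber_sum_add)

lemma fiber_sum_single:
  "fiber_sum L a (Poly_Mapping.single b c) = (if lattice_congruent L a b then c else 0)"
proof -
  have "{b' \<in> Poly_Mapping.keys (Poly_Mapping.single b c). lattice_congruent L a b'}
      = (if c \<noteq> 0 \<and> lattice_congruent L a b then {b} else {})" by auto
  then show ?thesis unfolding fiber_sum_def by auto
qed

lemma fiber_sum_single_mult_binom:
  fixes u :: "'v::finite \<Rightarrow> int"
  assumes "is_lattice L" "u \<in> L"
  shows "fiber_sum L a (Poly_Mapping.single t c * (binom u :: ('v,'k::comm_ring_1) mpoly)) = 0"
proof -
  let ?p = "t + Abs_poly_mapping (pos_part u)" and ?n = "t + Abs_poly_mapping (neg_part u)"
  have "int_exponents ?p - int_exponents ?n = u"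
    by (rule ext) (simp add: int_exponents_def lookup_add flip: pos_part_minus_neg_part[of u])
  then have "lattice_congruent L a ?p \<longleftrightarrow> lattice_congruent L a ?n"
    using lattice_congruent_cong assms by metis
  then show ?thesis
    unfolding binom_def monom_c_def
    by (simp add: right_diff_distrib mult_single fiber_sum_diff fiber_sum_single)
qed

lemma fiber_sum_lattice_ideal:
  assumes L: "is_lattice L" and p: "p \<in> lattice_ideal TYPE('k::field) L"
  shows "fiber_sum L a (p :: ('v::finite,'k) mpoly) = 0"
proof -
  from p obtain F c where F: "F \<subseteq> {binom u | u. u \<in> L}" "p = (\<Sum>f\<in>F. c f * f)"
    unfolding lattice_ideal_def gen_ideal_def by blast
  have "fiber_sum L a (g * f) = 0" if "f \<in> F" for f g
  proof -
    obtain u where u: "u \<in> L" "f = binom u" using F(1) \<open>f \<in> F\<close> by blast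
    have "g * f = (\<Sum>t\<in>Poly_Mapping.keys g. Poly_Mapping.single t (Poly_Mapping.lookup g t) * f)"
      by (subst poly_mapping_sum_single_keys[of g]) (simp add: sum_distrib_right)
    then show ?thesis
      using fiber_sum_single_mult_binom[OF L u(1), where 'k='k] u(2) by (simp add: fiber_sum_sum)
  qed
  then show ?thesis using F(2) by (simp add: fiber_sum_sum)
qed

lemma lattice_ideal_keys_congruent:
  assumes L: "is_lattice L" and p: "p \<in> lattice_ideal TYPE('k::field) L"
    and a: "a \<in> Poly_Mapping.keys (p :: ('v::finite,'k) mpoly)"
  shows "\<exists>b\<in>Poly_Mapping.keys p. b \<noteq> a \<and> lattice_congruent L a b"
proof (rule ccontr)
  assume "\<not> ?thesis"
  then have "{b \<in> Poly_Mapping.keys p. lattice_congruent L a b} = {a}"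
    using a lattice_congruent_refl[OF L] by auto
  then have "fiber_sum L a p = Poly_Mapping.lookup p a" unfolding fiber_sum_def by simp
  then show False using fiber_sum_lattice_ideal[OF L p] a by (simp add: in_keys_iff)
qed

lemma lattice_ideal_key_above_pos_part:
  assumes L: "is_lattice L" and p: "p \<in> lattice_ideal TYPE('k::field) L"
    and a: "a \<in> Poly_Mapping.keys (p :: ('v::finite,'k) mpoly)"
  shows "\<exists>y\<in>L. y \<noteq> 0 \<and> (\<forall>i. pos_part y i \<le> Poly_Mapping.lookup a i)"
proof -
  obtain b where b: "b \<noteq> a" "lattice_congruent L a b"
    using lattice_ideal_keys_congruent[OF L p a] by blast
  let ?y = "int_exponents a - int_exponents b"
  have "?y \<in> L"
    using lattice_uminus[OF L] b(2) unfolding lattice_congruent_def by fastforce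
  moreover have "?y \<noteq> 0"
    using b(1) poly_mapping_eqI[of a b] by (auto simp: int_exponents_def fun_eq_iff)
  moreover have "\<forall>i. pos_part ?y i \<le> Poly_Mapping.lookup a i"
    unfolding pos_part_def int_exponents_def by (simp add: nat_le_iff)
  ultimately show ?thesis by blast
qed

subsection \<open>Indispensable monomials and lattice vectors\<close>

lemma indispensable_monomial_minimal_pos_part:
  fixes L :: "('v::finite \<Rightarrow> int) set"
  assumes L: "is_lattice L" and y0: "y0 \<in> L" "y0 \<noteq> 0"
    and minimal: "\<And>y. y \<in> L \<Longrightarrow> y \<noteq> 0 \<Longrightarrow> \<forall>i. pos_part y i \<le> pos_part y0 i \<Longrightarrow>
      pos_part y = pos_part y0"
  shows "indispensable_monomial TYPE('k::field) L (pos_part y0)"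
  unfolding indispensable_monomial_def
proof (intro allI impI)
  define w where "w = pos_part y0"
  fix B :: "('v,'k) mpoly set"
  assume "(\<forall>b\<in>B. is_binomial b) \<and> gen_ideal B = lattice_ideal TYPE('k) L"
  then have B: "gen_ideal B = lattice_ideal TYPE('k) L" by blast
  have "binom y0 \<in> lattice_ideal TYPE('k) L"
    unfolding lattice_ideal_def using y0 by (auto intro!: gen_ideal_generator)
  then obtain F c where F: "F \<subseteq> B" "binom y0 = (\<Sum>f\<in>F. c f * f)"
    unfolding gen_ideal_def B[symmetric] by blast
  have "Poly_Mapping.lookup (binom y0 :: ('v,'k) mpoly) (Abs_poly_mapping w) = 1"
    using pos_part_neq_neg_part[OF y0(2)] unfolding binom_def monom_c_def w_def
    by (simp add: lookup_minus lookup_single when_def Abs_poly_mapping_inject)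
  then have "(\<Sum>f\<in>F. Poly_Mapping.lookup (c f * f) (Abs_poly_mapping w)) \<noteq> 0"
    using F(2) by (simp add: lookup_sum)
  then obtain f where f: "f \<in> F" "Poly_Mapping.lookup (c f * f) (Abs_poly_mapping w) \<noteq> 0"
    by (meson sum.not_neutral_contains_not_neutral)
  then obtain t a where a: "a \<in> Poly_Mapping.keys f" "Abs_poly_mapping w = t + a"
    using keys_mult by (blast dest: in_keys_iff[THEN iffD2])
  have fB: "f \<in> B" using f(1) F(1) by blast
  then have "f \<in> lattice_ideal TYPE('k) L" using B gen_ideal_generator by blast
  then obtain y where y: "y \<in> L" "y \<noteq> 0" "\<forall>i. pos_part y i \<le> Poly_Mapping.lookup a i"
    using lattice_ideal_key_above_pos_part[OF L _ a(1)] by blast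
  have a_le_w: "Poly_Mapping.lookup a i \<le> w i" for i
    using arg_cong[OF a(2), of "\<lambda>m. Poly_Mapping.lookup m i"] by (simp add: lookup_add)
  then have "\<forall>i. pos_part y i \<le> w i" using y(3) le_trans by blast
  then have "pos_part y = w" using minimal y(1,2) unfolding w_def by blast
  then have "Poly_Mapping.lookup a = w" using y(3) a_le_w by (intro ext antisym) auto
  then have "a = Abs_poly_mapping w" by (metis lookup_inverse)
  then show "\<exists>b\<in>B. Poly_Mapping.lookup b (Abs_poly_mapping (pos_part y0)) \<noteq> 0"
    using fB a(1) unfolding w_def by (auto simp: in_keys_iff)
qed

lemma exists_indispensable_below_pos_part:
  fixes L :: "('v::finite \<Rightarrow> int) set"
  assumes L: "is_lattice L" and z: "z \<in> L" "z \<noteq> 0"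
  shows "\<exists>w. indispensable_monomial TYPE('k::field) L w \<and> (\<forall>i. w i \<le> pos_part z i)"
proof -
  define P where "P y \<longleftrightarrow> y \<in> L \<and> y \<noteq> 0 \<and> (\<forall>i. pos_part y i \<le> pos_part z i)" for y
  have "P z" using z unfolding P_def by simp
  then obtain y0 where y0: "P y0"
    and least: "\<And>y. P y \<Longrightarrow> (\<Sum>i\<in>UNIV. pos_part y0 i) \<le> (\<Sum>i\<in>UNIV. pos_part y i)"
    using ex_has_least_nat[of P z "\<lambda>y. \<Sum>i\<in>UNIV. pos_part y i"] by blast
  have "pos_part y = pos_part y0"
    if y: "y \<in> L" "y \<noteq> 0" "\<forall>i. pos_part y i \<le> pos_part y0 i" for y
  proof (rule ccontr)
    assume "pos_part y \<noteq> pos_part y0"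
    then obtain j where "pos_part y j < pos_part y0 j" using y(3) le_neq_implies_less by blast
    then have "(\<Sum>i\<in>UNIV. pos_part y i) < (\<Sum>i\<in>UNIV. pos_part y0 i)"
      using sum_strict_mono_ex1[of UNIV "pos_part y" "pos_part y0"] y(3) by auto
    moreover have "P y" using y y0 unfolding P_def by (meson le_trans)
    ultimately show False using least by fastforce
  qed
  then have "indispensable_monomial TYPE('k) L (pos_part y0)"
    using indispensable_monomial_minimal_pos_part L y0 unfolding P_def by blast
  then show ?thesis using y0 unfolding P_def by blast
qed

lemma indispensable_monomial_is_pos_part:
  fixes L :: "('v::finite \<Rightarrow> int) set"
  assumes L: "is_lattice L" and w: "indispensable_monomial TYPE('k::field) L w"
  shows "\<exists>y\<in>L. y \<noteq> 0 \<and> pos_part y = w"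
proof -
  define B :: "('v,'k) mpoly set" where "B = {binom u | u. u \<in> L}"
  have "is_binomial b" if "b \<in> B" for b
  proof -
    obtain u where "b = binom u" using \<open>b \<in> B\<close> unfolding B_def by blast
    then have "b = monom_c (pos_part u) 1 + monom_c (neg_part u) (- 1)"
      unfolding binom_def monom_c_def by (simp add: single_uminus)
    then show ?thesis unfolding is_binomial_def by blast
  qed
  moreover have "gen_ideal B = lattice_ideal TYPE('k) L" unfolding B_def lattice_ideal_def ..
  ultimately obtain y where y: "y \<in> L"
    and "Poly_Mapping.lookup (binom y :: ('v,'k) mpoly) (Abs_poly_mapping w) \<noteq> 0"
    using w unfolding indispensable_monomial_def B_def by blast
  then have "(pos_part y = w) \<noteq> (neg_part y = w)"
    unfolding binom_def monom_c_def
    by (auto simp: lookup_minus lookup_single when_def Abs_poly_mapping_inject split: if_splits)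
  moreover have "y \<noteq> 0" using calculation by (auto simp: pos_part_def neg_part_def)
  ultimately show ?thesis
    using y lattice_uminus[OF L y] pos_part_uminus[of y] neg_equal_0_iff_equal by metis
qed

lemma Sat_pos_multiple:
  assumes L: "is_lattice L" and u: "u \<in> Sat L"
  shows "\<exists>d>0. (\<lambda>i. d * u i) \<in> L"
proof -
  obtain d where d: "d \<noteq> 0" "(\<lambda>i. d * u i) \<in> L" using u unfolding Sat_def by blast
  have "(\<lambda>i. - d * u i) \<in> L" using lattice_uminus[OF L d(2)] by (simp add: fun_Compl_def)
  then show ?thesis using d by (cases "d > 0") (auto intro: exI[of _ "- d"])
qed

lemma exists_indispensable_supp_subset_pos_part:
  fixes L :: "('v::finite \<Rightarrow> int) set"
  assumes L: "is_lattice L" and u: "u \<in> Sat L" "u \<noteq> 0"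
  shows "\<exists>w. indispensable_monomial TYPE('k::field) L w \<and> vsupp w \<subseteq> vsupp (pos_part u)"
proof -
  obtain d where d: "d > 0" "(\<lambda>i. d * u i) \<in> L" using Sat_pos_multiple[OF L u(1)] by blast
  have "(\<lambda>i. d * u i) \<noteq> 0" using u(2) d(1) by (auto simp: fun_eq_iff)
  then obtain w where w: "indispensable_monomial TYPE('k) L w"
    "\<forall>i. w i \<le> pos_part (\<lambda>i. d * u i) i"
    using exists_indispensable_below_pos_part[OF L d(2)] by blast
  have "vsupp (pos_part (\<lambda>i. d * u i)) = vsupp (pos_part u)"
    using d(1) by (simp add: vsupp_pos_part zero_less_mult_iff)
  moreover have "vsupp w \<subseteq> vsupp (pos_part (\<lambda>i. d * u i))"
    using w(2) unfolding vsupp_def by (auto intro: less_le_trans)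
  ultimately show ?thesis using w(1) by auto
qed

subsection \<open>Conformal circuits\<close>

definition sign_conformal :: "('v \<Rightarrow> int) \<Rightarrow> ('v \<Rightarrow> int) \<Rightarrow> bool" where
  "sign_conformal u v \<longleftrightarrow> (\<forall>i. (u i > 0 \<longrightarrow> v i > 0) \<and> (u i < 0 \<longrightarrow> v i < 0))"

lemma sign_conformal_iff_mult:
  "sign_conformal u v \<longleftrightarrow> (\<forall>i. 0 \<le> u i * v i \<and> (v i = 0 \<longrightarrow> u i = 0))"
proof -
  have "((0 < x \<longrightarrow> 0 < y) \<and> (x < 0 \<longrightarrow> y < 0)) \<longleftrightarrow> (0 \<le> x * y \<and> (y = 0 \<longrightarrow> x = 0))"
    for x y :: int
    by (cases x "0::int" rule: linorder_cases; cases y "0::int" rule: linorder_cases)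
      (auto simp: zero_le_mult_iff)
  then show ?thesis unfolding sign_conformal_def by blast
qed

lemma sign_conformal_refl: "sign_conformal v v"
  unfolding sign_conformal_def by simp

lemma sign_conformal_trans: "sign_conformal u v \<Longrightarrow> sign_conformal v y \<Longrightarrow> sign_conformal u y"
  unfolding sign_conformal_def by blast

lemma sign_conformal_vsupp: "sign_conformal u v \<Longrightarrow> vsupp u \<subseteq> vsupp v"
  unfolding sign_conformal_def vsupp_def by (auto simp: neq_iff)

lemma sign_conformal_vsupp_pos_part:
  "sign_conformal u v \<Longrightarrow> vsupp (pos_part u) \<subseteq> vsupp (pos_part v)"
  unfolding sign_conformal_def vsupp_pos_part by auto

lemma kerZ_diff_smult:
  assumes "v \<in> kerZ a" "w \<in> kerZ a"
  shows "(\<lambda>i. \<alpha> * v i - \<beta> * w i) \<in> kerZ a"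
proof -
  have "(\<Sum>i\<in>UNIV. (\<alpha> * v i - \<beta> * w i) * a i j)
      = \<alpha> * (\<Sum>i\<in>UNIV. v i * a i j) - \<beta> * (\<Sum>i\<in>UNIV. w i * a i j)" for j
    by (simp add: sum_subtractf sum_distrib_left algebra_simps)
  then show ?thesis using assms unfolding kerZ_def by simp
qed

lemma kerZ_uminus: "w \<in> kerZ a \<Longrightarrow> - w \<in> kerZ a"
  unfolding kerZ_def by (simp add: sum_negf)

lemma kerZ_div:
  assumes "v \<in> kerZ a" "g \<noteq> 0" "\<And>i. g dvd v i"
  shows "(\<lambda>i. v i div g) \<in> kerZ a"
proof -
  have "g * (\<Sum>i\<in>UNIV. (v i div g) * a i j) = (\<Sum>i\<in>UNIV. v i * a i j)" for j
    by (simp add: sum_distrib_left assms(3) mult.assoc[symmetric])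
  then show ?thesis using assms unfolding kerZ_def by simp
qed

lemma sign_conformal_diff_smult:
  fixes v w :: "'v \<Rightarrow> int"
  assumes sub: "vsupp w \<subseteq> vsupp v" and A: "A > 0" and B: "B > 0"
    and ratio: "\<And>i. w i * v i > 0 \<Longrightarrow> B * \<bar>w i\<bar> \<le> \<bar>v i\<bar> * A"
  shows "sign_conformal (\<lambda>i. A * v i - B * w i) v"
  unfolding sign_conformal_iff_mult
proof
  fix i
  have "B * (w i * v i) \<le> A * (v i * v i)"
  proof (cases "w i * v i > 0")
    case True
    then have "B * (w i * v i) = B * \<bar>w i\<bar> * \<bar>v i\<bar>" by (simp add: abs_mult[symmetric])
    also have "\<dots> \<le> \<bar>v i\<bar> * A * \<bar>v i\<bar>" using ratio[OF True] by (simp add: mult_right_mono)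
    also have "\<dots> = A * (v i * v i)" by (simp add: algebra_simps)
    finally show ?thesis .
  next
    case False
    then have "B * (w i * v i) \<le> 0" using B by (simp add: mult_nonneg_nonpos)
    also have "0 \<le> A * (v i * v i)" using A by simp
    finally show ?thesis .
  qed
  moreover have "v i = 0 \<longrightarrow> w i = 0" using sub unfolding vsupp_def by auto
  ultimately show "0 \<le> (A * v i - B * w i) * v i \<and> (v i = 0 \<longrightarrow> A * v i - B * w i = 0)"
    by (simp add: algebra_simps)
qed

lemma kerZ_conformal_elimination:
  fixes v w :: "'v::finite \<Rightarrow> int"
  assumes v: "v \<in> kerZ a" and w: "w \<in> kerZ a" and sub: "vsupp w \<subset> vsupp v"
    and same_sign: "w k * v k > 0"
  shows "\<exists>v'\<in>kerZ a. v' \<noteq> 0 \<and> sign_conformal v' v \<and> vsupp v' \<subset> vsupp v"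
proof -
  define S where "S = {i. w i * v i > 0}"
  define r :: "'v \<Rightarrow> rat" where "r i = of_int \<bar>v i\<bar> / of_int \<bar>w i\<bar>" for i
  have "finite S" "S \<noteq> {}" using same_sign unfolding S_def by auto
  then have "Min (r ` S) \<in> r ` S" by simp
  then obtain i0 where i0: "i0 \<in> S" "r i0 = Min (r ` S)" by auto
  \<comment> \<open>A v - B w cancels the coordinate i0, whose ratio |v i| / |w i| is minimal among those where
    v and w have the same sign; the minimality keeps A v - B w sign-conformal to v\<close>
  define A where "A = \<bar>w i0\<bar>"
  define B where "B = \<bar>v i0\<bar>"
  have A: "A > 0" and B: "B > 0"
    using i0(1) unfolding A_def B_def S_def by (auto simp: zero_less_mult_iff)
  have ratio: "B * \<bar>w i\<bar> \<le> \<bar>v i\<bar> * A" if "w i * v i > 0" for i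
  proof -
    have "r i0 \<le> r i" using i0 \<open>finite S\<close> that unfolding S_def by simp
    moreover have "\<bar>w i\<bar> > 0" using that by (auto simp: zero_less_mult_iff)
    ultimately have "(of_int (B * \<bar>w i\<bar>) :: rat) \<le> of_int (\<bar>v i\<bar> * A)"
      using A unfolding r_def A_def B_def by (simp add: divide_simps)
    then show ?thesis by (simp only: of_int_le_iff)
  qed
  define v' where "v' = (\<lambda>i. A * v i - B * w i)"
  have conformal: "sign_conformal v' v"
    unfolding v'_def using sign_conformal_diff_smult sub A B ratio by blast
  have "v' i0 = 0"
    using i0(1) unfolding v'_def A_def B_def S_def
    by (cases "v i0 > 0"; cases "w i0 > 0") (auto simp: zero_less_mult_iff)
  then have "vsupp v' \<subset> vsupp v"
    using sign_conformal_vsupp[OF conformal] i0(1) unfolding S_def vsupp_def by auto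
  moreover obtain j where "j \<in> vsupp v" "j \<notin> vsupp w" using sub by blast
  then have "v' j \<noteq> 0" using A unfolding v'_def vsupp_def by simp
  then have "v' \<noteq> 0" by auto
  moreover have "v' \<in> kerZ a" unfolding v'_def using kerZ_diff_smult[OF v w] .
  ultimately show ?thesis using conformal by blast
qed

lemma exists_sign_conformal_support_minimal:
  fixes a :: "'v::finite \<Rightarrow> 'w::finite \<Rightarrow> int"
  assumes "v \<in> kerZ a" "v \<noteq> 0"
  shows "\<exists>u\<in>kerZ a. u \<noteq> 0 \<and> sign_conformal u v \<and> \<not> (\<exists>w\<in>kerZ a. w \<noteq> 0 \<and> vsupp w \<subset> vsupp u)"
  using assms
proof (induction "card (vsupp v)" arbitrary: v rule: less_induct)
  case less
  show ?case
  proof (cases "\<exists>w\<in>kerZ a. w \<noteq> 0 \<and> vsupp w \<subset> vsupp v")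
    case False
    then show ?thesis using less.prems sign_conformal_refl by blast
  next
    case True
    then obtain w where w: "w \<in> kerZ a" "w \<noteq> 0" "vsupp w \<subset> vsupp v" by blast
    from w(2) obtain k where "w k \<noteq> 0" by (auto simp: fun_eq_iff)
    moreover have "v k \<noteq> 0" using w(3) calculation unfolding vsupp_def by auto
    ultimately have "w k * v k > 0 \<or> (- w) k * v k > 0"
      by (auto simp: zero_less_mult_iff mult_less_0_iff linorder_neq_iff)
    moreover have "- w \<in> kerZ a" "vsupp (- w) = vsupp w"
      using kerZ_uminus[OF w(1)] by (auto simp: vsupp_def)
    ultimately obtain v' where v': "v' \<in> kerZ a" "v' \<noteq> 0" "sign_conformal v' v" "vsupp v' \<subset> vsupp v"
      using kerZ_conformal_elimination[OF less.prems(1)] w(1,3) by metis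
    then have "card (vsupp v') < card (vsupp v)" by (simp add: psubset_card_mono)
    then show ?thesis
      using less.hyps[OF _ v'(1,2)] sign_conformal_trans[OF _ v'(3)] by blast
  qed
qed

lemma exists_sign_conformal_circuit:
  fixes a :: "'v::finite \<Rightarrow> 'w::finite \<Rightarrow> int"
  assumes "v \<in> kerZ a" "v \<noteq> 0"
  shows "\<exists>u. is_circuit a u \<and> sign_conformal u v"
proof -
  obtain u where u: "u \<in> kerZ a" "u \<noteq> 0" "sign_conformal u v"
    and minimal: "\<not> (\<exists>w\<in>kerZ a. w \<noteq> 0 \<and> vsupp w \<subset> vsupp u)"
    using exists_sign_conformal_support_minimal[OF assms] by blast
  define g where "g = Gcd (range u)"
  have "g \<noteq> 0" using u(2) unfolding g_def by (auto simp: fun_eq_iff)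
  then have g: "g > 0" using Gcd_int_greater_eq_0[of "range u"] unfolding g_def by linarith
  define u' where "u' = (\<lambda>i. u i div g)"
  have u_eq: "u = (\<lambda>i. g * u' i)" unfolding u'_def g_def by (simp add: Gcd_dvd)
  then have "g = normalize (g * Gcd (range u'))"
    unfolding g_def by (metis Gcd_mult image_image)
  then have "Gcd (range u') = 1" using g by (simp add: abs_mult)
  moreover have "sign_conformal u' u" "vsupp u' = vsupp u"
    using g unfolding sign_conformal_def vsupp_def
    by (subst u_eq; simp add: zero_less_mult_iff mult_less_0_iff)+
  moreover have "u' \<in> kerZ a"
    unfolding u'_def g_def by (rule kerZ_div) (use u(1) \<open>g \<noteq> 0\<close> g_def in auto)
  moreover have "u' \<noteq> 0" using u(2) u_eq by auto
  ultimately show ?thesis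
    unfolding is_circuit_def using minimal sign_conformal_trans[OF _ u(3)] by metis
qed

subsection \<open>Minimal supports of indispensable monomials\<close>

lemma lattice_subset_Sat: "L \<subseteq> Sat L"
  unfolding Sat_def by (auto intro: exI[of _ 1])

lemma T_min_vsupp: "E \<in> T_min K L \<Longrightarrow> \<exists>w. indispensable_monomial K L w \<and> E = vsupp w"
  unfolding T_min_def Let_def by blast

lemma T_min_minimal:
  "E \<in> T_min K L \<Longrightarrow> indispensable_monomial K L w \<Longrightarrow> \<not> vsupp w \<subset> E"
  unfolding T_min_def Let_def by blast

lemma vsupp_pos_part_not_psubset_T_min:
  fixes L :: "('v::finite \<Rightarrow> int) set" and a :: "'v \<Rightarrow> 'w::finite \<Rightarrow> int"
  assumes L: "is_lattice L" and sat: "Sat L = kerZ a"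
    and E: "E \<in> T_min TYPE('k::field) L" and u: "u \<in> kerZ a" "u \<noteq> 0"
  shows "\<not> vsupp (pos_part u) \<subset> E"
proof
  assume below: "vsupp (pos_part u) \<subset> E"
  obtain w where w: "indispensable_monomial TYPE('k) L w" "vsupp w \<subseteq> vsupp (pos_part u)"
    using exists_indispensable_supp_subset_pos_part[OF L _ u(2)] u(1) sat by blast
  with below have "vsupp w \<subset> E" by blast
  then show False using T_min_minimal[OF E w(1)] by blast
qed

theorem lemma2p5:
  fixes L :: "('v::finite \<Rightarrow> int) set"
    and a :: "'v \<Rightarrow> 'w::finite \<Rightarrow> int"
    and E :: "'v set"
  assumes "is_lattice L"
    and "L \<noteq> {0}"
    and "{u \<in> L. \<forall>i. u i \<ge> 0} = {0}"
    and "Sat L = kerZ a"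
    and "E \<in> T_min TYPE('k::field) L"
  shows "\<not> (\<exists>u. is_circuit a u \<and> (vsupp (pos_part u) \<subset> E \<or> vsupp (neg_part u) \<subset> E))
     \<and> (\<exists>u. is_circuit a u \<and> (vsupp (pos_part u) = E \<or> vsupp (neg_part u) = E))"
proof -
  note L = assms(1) and sat = assms(4) and E = assms(5)
  have not_below: "\<not> vsupp (pos_part u) \<subset> E" if "u \<in> kerZ a" "u \<noteq> 0" for u
    using vsupp_pos_part_not_psubset_T_min[OF L sat E that] .
  have no_circuit_below: "\<not> (\<exists>u. is_circuit a u \<and> (vsupp (pos_part u) \<subset> E \<or> vsupp (neg_part u) \<subset> E))"
  proof (intro notI, elim exE conjE disjE)
    fix u assume "is_circuit a u" "vsupp (pos_part u) \<subset> E"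
    then show False using not_below unfolding is_circuit_def by blast
  next
    fix u assume "is_circuit a u" "vsupp (neg_part u) \<subset> E"
    moreover have "- u \<in> kerZ a" "- u \<noteq> 0"
      using calculation kerZ_uminus unfolding is_circuit_def by auto
    ultimately show False using not_below[of "- u"] by (simp add: pos_part_uminus)
  qed
  obtain w where w: "indispensable_monomial TYPE('k) L w" "E = vsupp w"
    using T_min_vsupp[OF E] by blast
  obtain y where y: "y \<in> L" "y \<noteq> 0" "pos_part y = w"
    using indispensable_monomial_is_pos_part[OF L w(1)] by blast
  have "y \<in> kerZ a" using y(1) lattice_subset_Sat sat by blast
  then obtain u where u: "is_circuit a u" "sign_conformal u y"
    using exists_sign_conformal_circuit y(2) by blast
  then have "vsupp (pos_part u) \<subseteq> E" using sign_conformal_vsupp_pos_part w(2) y(3) by blast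
  then have "vsupp (pos_part u) = E" using no_circuit_below u(1) by blast
  then show ?thesis using no_circuit_below u(1) by blast
qed

end
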